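(* Let $P\subset\mathbb{R}^d$ be a full-dimensional lattice polytope with codegree $a$. If $P$ is nearly Gorenstein, then $P=\lfloor aP\rfloor+\{P\}$ (Minkowski sum).
   Context: $\mathbf{k}$ is an infinite field. $P$ has facet presentation $P=\{x: n_F(x)\ge -h_F\ \forall \text{ facets } F\}$ with $n_F\in(\mathbb{Z}^d)^*$ primitive inner normals and $h_F\in\mathbb{Z}$. The codegree is $a=\min\{k\in\mathbb{Z}_{\ge1}: \mathrm{int}(kP)\cap\mathbb{Z}^d\ne\varnothing\}$. For a lattice polytope $Q$, $\lfloor Q\rfloor=\mathrm{conv}(\mathrm{int}(Q)\cap\mathbb{Z}^d)$ (floor polytope). The remainder polytope is $\{P\}=\mathrm{conv}\{x\in\mathbb{Z}^d: n_F(x)\ge (a-1)h_F-1\ \forall F\}$. The Minkowski sum is $A+B=\{x+y: x\in A, y\in B\}$. $P$ is nearly Gorenstein if its Ehrhart ring $A(P)=\mathbf{k}[\mathbf{t}^xs^k: k\in\mathbb{N}, x\in kP\cap\mathbb{Z}^d]$ (graded by $k$, graded maximal ideal $\mathbf{m}$, canonical module $\omega$) satisfies $\mathbf{m}\subseteq \mathrm{tr}(\omega)=\sum_{\phi\in\mathrm{Hom}(\omega,A(P))}\phi(\omega)$. *)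

theory Defs
  imports "HOL-Analysis.Analysis"
begin

definition lattice_pts :: "(real^'d) set" where
  "lattice_pts = {x. \<forall>i. x $ i \<in> \<int>}"

definition lattice_polytope :: "(real^'d) set \<Rightarrow> bool" where
  "lattice_polytope P \<longleftrightarrow> (\<exists>V. finite V \<and> V \<subseteq> lattice_pts \<and> P = convex hull V)"

definition dilate :: "real \<Rightarrow> (real^'d) set \<Rightarrow> (real^'d) set" where
  "dilate c P = (\<lambda>x. c *\<^sub>R x) ` P"

definition full_dim :: "(real^'d) set \<Rightarrow> bool" where
  "full_dim P \<longleftrightarrow> interior P \<noteq> {}"

definition primitive_vec :: "real^'d \<Rightarrow> bool" where
  "primitive_vec n \<longleftrightarrow> n \<in> lattice_pts \<and>
     (\<forall>k::int. (\<forall>i. \<exists>m::int. n $ i = of_int k * of_int m) \<longrightarrow> \<bar>k\<bar> = 1)"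

definition codegree :: "(real^'d) set \<Rightarrow> nat" where
  "codegree P = (LEAST k::nat. k \<ge> 1 \<and> interior (dilate (real k) P) \<inter> lattice_pts \<noteq> {})"

definition floor_polytope :: "(real^'d) set \<Rightarrow> (real^'d) set" where
  "floor_polytope Q = convex hull (interior Q \<inter> lattice_pts)"

definition facet_data :: "(real^'d) set \<Rightarrow> (real^'d) set \<Rightarrow> real^'d \<Rightarrow> int \<Rightarrow> bool" where
  "facet_data P F n h \<longleftrightarrow> F facet_of P \<and> primitive_vec n \<and>
     P \<subseteq> {y. n \<bullet> y \<ge> - of_int h} \<and> F \<subseteq> {y. n \<bullet> y = - of_int h}"

definition remainder_polytope :: "(real^'d) set \<Rightarrow> (real^'d) set" where
  "remainder_polytope P = convex hull {x \<in> lattice_pts.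
     \<forall>F n h. facet_data P F n h \<longrightarrow>
       n \<bullet> x \<ge> (real (codegree P) - 1) * of_int h - 1}"

definition minkowski_sum :: "(real^'d) set \<Rightarrow> (real^'d) set \<Rightarrow> (real^'d) set" where
  "minkowski_sum A B = {x + y | x y. x \<in> A \<and> y \<in> B}"

text \<open>Monomials t^x s^k are indexed by pairs (x,k) with x a lattice point of kP.
  Ring elements are finitely supported k-valued functions on these exponents.\<close>

definition ehr_exps :: "(real^'d) set \<Rightarrow> ((real^'d) \<times> nat) set" where
  "ehr_exps P = {(x,k). x \<in> lattice_pts \<and> x \<in> dilate (real k) P}"

definition supp :: "('a \<Rightarrow> 'k::zero) \<Rightarrow> 'a set" where
  "supp f = {m. f m \<noteq> 0}"

definition ehr_ring :: "(real^'d) set \<Rightarrow> ((real^'d) \<times> nat \<Rightarrow> 'k::field) set" where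
  "ehr_ring P = {f. finite (supp f) \<and> supp f \<subseteq> ehr_exps P}"

definition eadd :: "((real^'d) \<times> nat \<Rightarrow> 'k::field) \<Rightarrow> ((real^'d) \<times> nat \<Rightarrow> 'k) \<Rightarrow> ((real^'d) \<times> nat \<Rightarrow> 'k)" where
  "eadd f g = (\<lambda>m. f m + g m)"

definition ezero :: "(real^'d) \<times> nat \<Rightarrow> 'k::field" where
  "ezero = (\<lambda>m. 0)"

definition emult :: "((real^'d) \<times> nat \<Rightarrow> 'k::field) \<Rightarrow> ((real^'d) \<times> nat \<Rightarrow> 'k) \<Rightarrow> ((real^'d) \<times> nat \<Rightarrow> 'k)" where
  "emult f g = (\<lambda>(z,n). \<Sum>p \<in> {p \<in> supp f \<times> supp g.
        fst (fst p) + fst (snd p) = z \<and> snd (fst p) + snd (snd p) = n}.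
      f (fst p) * g (snd p))"

text \<open>Graded maximal ideal: elements with vanishing degree-0 part (degree 0 is only (0,0)).\<close>
definition ehr_max_ideal :: "(real^'d) set \<Rightarrow> ((real^'d) \<times> nat \<Rightarrow> 'k::field) set" where
  "ehr_max_ideal P = {f \<in> ehr_ring P. \<forall>x. f (x, 0) = 0}"

text \<open>Canonical module (Danilov--Stanley): the ideal spanned by the monomials in the
  interior of the cone over P, i.e. (x,k) with k \<ge> 1 and x in the interior of kP.\<close>
definition ehr_canonical :: "(real^'d) set \<Rightarrow> ((real^'d) \<times> nat \<Rightarrow> 'k::field) set" where
  "ehr_canonical P = {f \<in> ehr_ring P.
     supp f \<subseteq> {(x,k). k \<ge> 1 \<and> x \<in> interior (dilate (real k) P)}}"

definition ehr_hom_canonical ::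
  "(real^'d) set \<Rightarrow> (((real^'d) \<times> nat \<Rightarrow> 'k::field) \<Rightarrow> ((real^'d) \<times> nat \<Rightarrow> 'k)) \<Rightarrow> bool" where
  "ehr_hom_canonical P \<phi> \<longleftrightarrow>
     (\<forall>w \<in> ehr_canonical P. \<phi> w \<in> ehr_ring P) \<and>
     (\<forall>w1 \<in> ehr_canonical P. \<forall>w2 \<in> ehr_canonical P. \<phi> (eadd w1 w2) = eadd (\<phi> w1) (\<phi> w2)) \<and>
     (\<forall>a \<in> ehr_ring P. \<forall>w \<in> ehr_canonical P. \<phi> (emult a w) = emult a (\<phi> w))"

inductive_set ehr_trace :: "(real^'d) set \<Rightarrow> ((real^'d) \<times> nat \<Rightarrow> 'k::field) set"
  for P :: "(real^'d) set" where
  zero: "ezero \<in> ehr_trace P"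
| step: "ehr_hom_canonical P \<phi> \<Longrightarrow> w \<in> ehr_canonical P \<Longrightarrow> t \<in> ehr_trace P
          \<Longrightarrow> eadd (\<phi> w) t \<in> ehr_trace P"

definition nearly_gorenstein :: "'k::field itself \<Rightarrow> (real^'d) set \<Rightarrow> bool" where
  "nearly_gorenstein TYPE('k) P \<longleftrightarrow>
     ehr_max_ideal P \<subseteq> (ehr_trace P :: ((real^'d) \<times> nat \<Rightarrow> 'k) set)"

end

theory Submission
  imports Defs
begin

text \<open>
  Let \<open>a\<close> be the codegree, \<open>A\<close> the interior lattice points of \<open>aP\<close> and \<open>B\<close> the
  lattice points of the remainder polytope.  For a facet inequality \<open>n x \<ge> -h\<close>, interior
  lattice points of \<open>aP\<close> satisfy \<open>n x + a h \<ge> 1\<close>, so \<open>A + B \<subseteq> P\<close>.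

  Conversely, let \<open>v\<close> be a lattice point of \<open>P\<close>.  Since \<open>t\<^sup>v s\<close> lies in the trace of
  the canonical module, some interior monomial \<open>t\<^sup>x s\<^sup>k\<close> divides \<open>t\<^sup>v s \<cdot> t\<^sup>y s\<^sup>l\<close> for
  every interior monomial \<open>t\<^sup>y s\<^sup>l\<close>.  Every facet has an interior lattice point of some
  \<open>lP\<close> at height one above it; testing the divisibility against it gives
  \<open>n (v - x) \<ge> (k - 1) h - 1\<close>, and testing it against a point of \<open>A\<close> gives
  \<open>k \<in> {a, a + 1}\<close>.  In both cases \<open>v\<close> splits as a point of \<open>A\<close> plus a point of \<open>B\<close>.
  Applied to the vertices of \<open>P\<close> this gives \<open>P \<subseteq> conv (A + B)\<close>.
\<close>

section \<open>Lattice points and primitive vectors\<close>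

lemma zero_in_lattice_pts [simp]: "0 \<in> lattice_pts"
  by (simp add: lattice_pts_def)

lemma lattice_pts_add: "x \<in> lattice_pts \<Longrightarrow> y \<in> lattice_pts \<Longrightarrow> x + y \<in> lattice_pts"
  by (auto simp: lattice_pts_def)

lemma lattice_pts_diff: "x \<in> lattice_pts \<Longrightarrow> y \<in> lattice_pts \<Longrightarrow> x - y \<in> lattice_pts"
  by (auto simp: lattice_pts_def)

lemma lattice_pts_uminus: "x \<in> lattice_pts \<Longrightarrow> - x \<in> lattice_pts"
  by (auto simp: lattice_pts_def)

lemma lattice_pts_scaleR: "x \<in> lattice_pts \<Longrightarrow> c \<in> \<int> \<Longrightarrow> c *\<^sub>R x \<in> lattice_pts"
  by (auto simp: lattice_pts_def)

lemma lattice_pts_sum: "(\<And>x. x \<in> S \<Longrightarrow> f x \<in> lattice_pts) \<Longrightarrow> sum f S \<in> lattice_pts"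
  by (induction S rule: infinite_finite_induct) (auto simp: lattice_pts_add)

lemma axis_in_lattice_pts: "axis i 1 \<in> lattice_pts"
  by (auto simp: lattice_pts_def axis_def)

lemma inner_lattice_pts_Ints: "n \<in> lattice_pts \<Longrightarrow> x \<in> lattice_pts \<Longrightarrow> n \<bullet> x \<in> \<int>"
  by (auto simp: lattice_pts_def inner_vec_def intro!: Ints_sum)

definition cofactor_row :: "('d::finite \<Rightarrow> real^'d) \<Rightarrow> 'd \<Rightarrow> real^'d" where
  "cofactor_row \<beta> i0 = (\<chi> j. det (\<chi> i. if i = i0 then axis j 1 else \<beta> i))"

lemma det_replace_row_eq_inner:
  "det (\<chi> i. if i = i0 then z else \<beta> i) = cofactor_row \<beta> i0 \<bullet> z"
proof -
  have "det (\<chi> i. if i = i0 then z else \<beta> i)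
      = det (\<chi> i. if i = i0 then (\<Sum>j\<in>UNIV. z $ j *s axis j 1) else \<beta> i)"
    by (simp only: basis_expansion)
  also have "\<dots> = (\<Sum>j\<in>UNIV. det (\<chi> i. if i = i0 then z $ j *s axis j 1 else \<beta> i))"
    by (rule det_linear_row_sum) simp
  also have "\<dots> = (\<Sum>j\<in>UNIV. z $ j * det (\<chi> i. if i = i0 then axis j 1 else \<beta> i))"
    by (simp add: det_row_mul)
  also have "\<dots> = cofactor_row \<beta> i0 \<bullet> z"
    by (simp add: cofactor_row_def inner_vec_def mult.commute)
  finally show ?thesis .
qed

lemma cofactor_row_in_lattice_pts:
  fixes \<beta> :: "'d::finite \<Rightarrow> real^'d"
  assumes "\<And>i. i \<noteq> i0 \<Longrightarrow> \<beta> i \<in> lattice_pts"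
  shows "cofactor_row \<beta> i0 \<in> lattice_pts"
proof -
  have "(\<chi> i. if i = i0 then axis j 1 else \<beta> i) $ i $ l \<in> \<int>" for i j l :: 'd
    using assms[of i] by (auto simp: axis_def lattice_pts_def)
  then show ?thesis
    unfolding lattice_pts_def cofactor_row_def det_def
    by (auto intro!: Ints_sum Ints_prod Ints_mult)
qed

lemma cofactor_row_orthogonal:
  fixes \<beta> :: "'d::finite \<Rightarrow> real^'d"
  assumes "i \<noteq> i0"
  shows "cofactor_row \<beta> i0 \<bullet> \<beta> i = 0"
proof -
  have "det (\<chi> k. if k = i0 then \<beta> i else \<beta> k) = 0"
    by (rule det_identical_rows[OF assms[symmetric]]) (simp add: row_def vec_eq_iff)
  then show ?thesis
    by (simp add: det_replace_row_eq_inner)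
qed

lemma cofactor_row_nonzero:
  fixes \<beta> :: "'d::finite \<Rightarrow> real^'d"
  assumes "independent (insert e (\<beta> ` (UNIV - {i0})))"
    and "card (insert e (\<beta> ` (UNIV - {i0}))) = CARD('d)"
  shows "cofactor_row \<beta> i0 \<noteq> 0"
proof -
  define M :: "real^'d^'d" where "M = (\<chi> i. if i = i0 then e else \<beta> i)"
  have "rows M = insert e (\<beta> ` (UNIV - {i0}))"
    by (auto simp: rows_def M_def row_def image_iff)
  then have "rank M = CARD('d)"
    using assms by (simp add: row_rank_def dim_eq_card_independent)
  then have "det M \<noteq> 0"
    by (simp add: det_eq_0_rank)
  then show ?thesis
    by (auto simp: M_def det_replace_row_eq_inner)
qed

lemma independent_extend_by_cart_basis:
  fixes B :: "(real^'d) set"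
  assumes "independent B"
  obtains B' where "B \<subseteq> B'" "B' \<subseteq> B \<union> cart_basis" "independent B'" "card B' = CARD('d)"
proof -
  obtain B' where B': "B \<subseteq> B'" "B' \<subseteq> B \<union> cart_basis" "independent B'"
    "B \<union> cart_basis \<subseteq> span B'"
    using maximal_independent_subset_extend[of B "B \<union> cart_basis"] assms by blast
  have "CARD('d) = dim (cart_basis :: (real^'d) set)"
    using independent_cart_basis card_cart_basis
    by (metis dependent_vec_eq dim_eq_card_independent)
  also have "\<dots> \<le> dim B'"
    using B'(4) by (metis dim_span dim_subset le_sup_iff)
  also have "\<dots> = card B'"
    using B'(3) by (rule dim_eq_card_independent)
  finally have "CARD('d) \<le> card B'" .
  moreover have "card B' \<le> CARD('d)"
    using independent_bound[OF B'(3)] by simp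
  ultimately show ?thesis
    using that B' by simp
qed

text \<open>Extend a basis of \<open>span X\<close> by unit vectors to a basis of the whole space and
  drop one added vector; the cofactor row of the remaining \<open>d - 1\<close> rows is orthogonal to
  them, nonzero, and integral.\<close>
lemma lattice_orthogonal_exists:
  fixes X :: "(real^'d) set"
  assumes X: "X \<subseteq> lattice_pts" and dim: "dim X < CARD('d)"
  obtains w where "w \<in> lattice_pts" "w \<noteq> 0" "\<And>x. x \<in> X \<Longrightarrow> w \<bullet> x = 0"
proof -
  obtain B where B: "B \<subseteq> X" "independent B" "X \<subseteq> span B" "card B = dim X"
    by (rule basis_exists)
  obtain B' where B': "B \<subseteq> B'" "B' \<subseteq> B \<union> cart_basis" "independent B'" "card B' = CARD('d)"
    using independent_extend_by_cart_basis[OF B(2)] .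
  have finB': "finite B'"
    using B'(3) by (rule finiteI_independent)
  have B'L: "B' \<subseteq> lattice_pts"
    using B'(2) B(1) X axis_in_lattice_pts unfolding cart_basis_def by blast
  have "\<not> B' \<subseteq> B"
  proof
    assume "B' \<subseteq> B"
    then have "B' = B"
      using B'(1) by blast
    then show False
      using B(4) B'(4) dim by simp
  qed
  then obtain e where e: "e \<in> B'" "e \<notin> B"
    by blast
  obtain i0 :: 'd where True
    by blast
  have "card (UNIV - {i0}) = card (B' - {e})"
    using B'(4) e(1) finB' by (simp add: card_Diff_singleton)
  then obtain \<beta> where \<beta>: "bij_betw \<beta> (UNIV - {i0}) (B' - {e})"
    using finite_same_card_bij finB' by (meson finite finite_Diff)
  then have rows: "insert e (\<beta> ` (UNIV - {i0})) = B'"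
    using e(1) by (auto simp: bij_betw_def)
  define w where "w = cofactor_row \<beta> i0"
  have "w \<in> lattice_pts"
    unfolding w_def
  proof (rule cofactor_row_in_lattice_pts)
    fix i
    assume "i \<noteq> i0"
    then have "\<beta> i \<in> B' - {e}"
      using \<beta> bij_betwE by blast
    then show "\<beta> i \<in> lattice_pts"
      using B'L by blast
  qed
  moreover have "w \<noteq> 0"
    unfolding w_def by (rule cofactor_row_nonzero[of e]) (simp_all add: rows B'(3,4))
  moreover have "w \<bullet> x = 0" if "x \<in> X" for x
  proof -
    have "w \<bullet> b = 0" if "b \<in> B" for b
    proof -
      have "b \<in> \<beta> ` (UNIV - {i0})"
        using \<beta> that e B'(1) by (auto simp: bij_betw_def)
      then show ?thesis
        using cofactor_row_orthogonal by (auto simp: w_def)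
    qed
    then have "span B \<subseteq> {x. w \<bullet> x = 0}"
      by (intro span_minimal subspace_hyperplane) auto
    then show ?thesis
      using B(3) that by blast
  qed
  ultimately show ?thesis
    using that by blast
qed

lemma Gcd_int_eq_linear_combination:
  fixes f :: "'a \<Rightarrow> int"
  assumes "finite I"
  shows "\<exists>c. (\<Sum>i\<in>I. c i * f i) = Gcd (f ` I)"
  using assms
proof (induction I rule: finite_induct)
  case empty
  then show ?case by simp
next
  case (insert i I)
  then obtain c where c: "(\<Sum>i\<in>I. c i * f i) = Gcd (f ` I)"
    by blast
  obtain u v where uv: "u * f i + v * Gcd (f ` I) = gcd (f i) (Gcd (f ` I))"
    using bezout_int by blast
  define c' where "c' j = (if j = i then u else v * c j)" for j
  have "(\<Sum>j\<in>I. c' j * f j) = (\<Sum>j\<in>I. v * (c j * f j))"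
    using insert(2) by (intro sum.cong) (auto simp: c'_def)
  then have "(\<Sum>j\<in>insert i I. c' j * f j) = u * f i + (\<Sum>j\<in>I. v * (c j * f j))"
    using insert(1,2) by (simp add: c'_def)
  also have "\<dots> = u * f i + v * Gcd (f ` I)"
    by (simp add: sum_distrib_left[symmetric] c)
  finally show ?case
    using uv by auto
qed

lemma primitive_vec_iff_Gcd:
  assumes "n \<in> lattice_pts"
  shows "primitive_vec n \<longleftrightarrow> Gcd (range (\<lambda>i. \<lfloor>n $ i\<rfloor>)) = 1"
proof -
  define G where "G = Gcd (range (\<lambda>i. \<lfloor>n $ i\<rfloor>))"
  have n: "n $ i = of_int \<lfloor>n $ i\<rfloor>" for i
    using assms by (simp add: lattice_pts_def)
  have "(\<forall>i. \<exists>m::int. n $ i = of_int k * of_int m) \<longleftrightarrow> k dvd G" for k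
  proof -
    have "(\<exists>m::int. (of_int a :: real) = of_int k * of_int m) \<longleftrightarrow> k dvd a" for a
      by (metis dvd_def of_int_eq_iff of_int_mult)
    then have "(\<exists>m::int. n $ i = of_int k * of_int m) \<longleftrightarrow> k dvd \<lfloor>n $ i\<rfloor>" for i
      using n by metis
    then show ?thesis
      by (simp add: G_def dvd_Gcd_iff)
  qed
  then have "primitive_vec n \<longleftrightarrow> (\<forall>k. k dvd G \<longrightarrow> \<bar>k\<bar> = 1)"
    using assms by (simp add: primitive_vec_def)
  also have "\<dots> \<longleftrightarrow> G = 1"
  proof
    assume "\<forall>k. k dvd G \<longrightarrow> \<bar>k\<bar> = 1"
    then have "\<bar>G\<bar> = 1"
      by (metis dvd_refl)
    then show "G = 1"
      by (simp add: G_def)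
  next
    assume "G = 1"
    then show "\<forall>k. k dvd G \<longrightarrow> \<bar>k\<bar> = 1"
      by (simp add: zdvd1_eq)
  qed
  finally show ?thesis
    by (simp add: G_def)
qed

lemma primitive_vec_nonzero: "primitive_vec n \<Longrightarrow> n \<noteq> 0"
proof
  assume "primitive_vec n" "n = 0"
  then have "\<bar>2::int\<bar> = 1"
    unfolding primitive_vec_def by (metis mult_zero_right of_int_0 zero_index)
  then show False
    by simp
qed

lemma primitive_vec_bezout:
  assumes "primitive_vec n"
  obtains z where "z \<in> lattice_pts" "n \<bullet> z = 1"
proof -
  have nL: "n \<in> lattice_pts"
    using assms by (simp add: primitive_vec_def)
  obtain c where c: "(\<Sum>i\<in>UNIV. c i * \<lfloor>n $ i\<rfloor>) = 1"
    using Gcd_int_eq_linear_combination[of UNIV "\<lambda>i. \<lfloor>n $ i\<rfloor>"] assms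
    by (auto simp: primitive_vec_iff_Gcd[OF nL])
  define z where "z = (\<chi> i. real_of_int (c i))"
  have "n \<bullet> z = of_int (\<Sum>i\<in>UNIV. c i * \<lfloor>n $ i\<rfloor>)"
    using nL by (simp add: inner_vec_def z_def lattice_pts_def mult.commute)
  with c have "n \<bullet> z = 1"
    by simp
  moreover have "z \<in> lattice_pts"
    by (simp add: z_def lattice_pts_def)
  ultimately show ?thesis
    using that by blast
qed

lemma primitive_vec_scaleR_eq:
  assumes "primitive_vec n" "primitive_vec n'" "n' = c *\<^sub>R n" "c > 0"
  shows "c = 1"
proof -
  obtain z z' where z: "z \<in> lattice_pts" "n \<bullet> z = 1" and z': "z' \<in> lattice_pts" "n' \<bullet> z' = 1"
    using primitive_vec_bezout assms(1,2) by metis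
  have "n' \<bullet> z = c"
    using z(2) assms(3) by simp
  then have "c \<in> \<int>"
    using z(1) assms(2) inner_lattice_pts_Ints unfolding primitive_vec_def by metis
  then have c: "c \<ge> 1"
    using assms(4) Ints_nonzero_abs_ge1[of c] by simp
  have "n \<bullet> z' \<in> \<int>"
    using z'(1) assms(1) inner_lattice_pts_Ints unfolding primitive_vec_def by metis
  moreover have cd: "c * (n \<bullet> z') = 1"
    using z'(2) assms(3) by simp
  moreover have "n \<bullet> z' > 0"
    using cd assms(4) zero_less_mult_iff[of c "n \<bullet> z'"] by simp
  ultimately have "n \<bullet> z' \<ge> 1"
    using Ints_nonzero_abs_ge1[of "n \<bullet> z'"] by simp
  then have "c \<le> c * (n \<bullet> z')"
    using assms(4) by (simp add: mult_le_cancel_left1)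
  then show ?thesis
    using c cd by simp
qed

lemma primitive_part_exists:
  assumes "n0 \<in> lattice_pts" "n0 \<noteq> 0"
  obtains c n where "c > 0" "primitive_vec n" "n0 = c *\<^sub>R n"
proof -
  define f where "f i = \<lfloor>n0 $ i\<rfloor>" for i
  define G where "G = Gcd (range f)"
  have nf: "n0 $ i = of_int (f i)" for i
    using assms(1) by (simp add: f_def lattice_pts_def)
  have "G \<noteq> 0"
    using assms(2) nf by (auto simp: G_def vec_eq_iff)
  then have G: "G > 0"
    using Gcd_int_greater_eq_0[of "range f"] unfolding G_def by linarith
  define f' where "f' i = f i div G" for i
  have f: "f i = G * f' i" for i
    by (simp add: f'_def G_def)
  define n where "n = (\<chi> i. real_of_int (f' i))"
  have nL: "n \<in> lattice_pts"
    by (simp add: n_def lattice_pts_def)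
  have "range f = (*) G ` range f'"
    by (auto simp: f)
  then have "G * 1 = G * Gcd (range f')"
    using Gcd_mult[of G "range f'"] G by (simp add: G_def abs_mult)
  then have "Gcd (range f') = 1"
    using G by simp
  then have "primitive_vec n"
    using nL by (simp add: primitive_vec_iff_Gcd n_def)
  moreover have "n0 = of_int G *\<^sub>R n"
    by (simp add: vec_eq_iff n_def nf f)
  ultimately show ?thesis
    using that[of "of_int G" n] G by simp
qed

section \<open>Dilations and facet data\<close>

lemma dilate_one [simp]: "dilate 1 P = P"
  by (simp add: dilate_def)

lemma dilate_zero: "P \<noteq> {} \<Longrightarrow> dilate 0 P = {0}"
  by (auto simp: dilate_def)

lemma mem_dilate_iff: "c \<noteq> 0 \<Longrightarrow> y \<in> dilate c P \<longleftrightarrow> (1 / c) *\<^sub>R y \<in> P"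
  by (force simp: dilate_def)

lemma interior_dilate: "c \<noteq> 0 \<Longrightarrow> interior (dilate c P) = dilate c (interior P)"
  unfolding dilate_def
  by (rule interior_injective_linear_image) (auto simp: linear_scaleR inj_on_def)

lemma facet_data_dilate_ge:
  assumes "facet_data P F n h" "y \<in> dilate t P" "t \<ge> 0"
  shows "0 \<le> n \<bullet> y + t * of_int h"
proof -
  obtain p where p: "p \<in> P" "y = t *\<^sub>R p"
    using assms(2) by (auto simp: dilate_def)
  have "t * (- of_int h) \<le> t * (n \<bullet> p)"
    using assms(1,3) p(1) by (intro mult_left_mono) (auto simp: facet_data_def)
  then show ?thesis
    using p(2) by simp
qed

lemma facet_data_interior_dilate_gt:
  assumes "facet_data P F n h" "y \<in> interior (dilate t P)" "t > 0"
  shows "0 < n \<bullet> y + t * of_int h"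
proof -
  have "dilate t P \<subseteq> {x. - (t * of_int h) \<le> n \<bullet> x}"
    using facet_data_dilate_ge[OF assms(1)] assms(3) by force
  then have "y \<in> interior {x. - (t * of_int h) \<le> n \<bullet> x}"
    using assms(2) interior_mono by blast
  moreover have "n \<noteq> 0"
    using assms(1) primitive_vec_nonzero by (auto simp: facet_data_def)
  ultimately have "- (t * of_int h) < n \<bullet> y"
    using interior_halfspace_ge[of n "- (t * of_int h)"] by auto
  then show ?thesis
    by simp
qed

lemma facet_data_interior_lattice_ge_1:
  assumes "facet_data P F n h" "y \<in> interior (dilate (real k) P)" "k \<ge> 1" "y \<in> lattice_pts"
  shows "1 \<le> n \<bullet> y + real k * of_int h"
proof -
  have "0 < n \<bullet> y + real k * of_int h"
    using facet_data_interior_dilate_gt[OF assms(1,2)] assms(3) by simp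
  moreover have "n \<bullet> y + real k * of_int h \<in> \<int>"
    using assms(1,4) inner_lattice_pts_Ints by (auto simp: facet_data_def primitive_vec_def)
  ultimately show ?thesis
    using Ints_nonzero_abs_ge1 by fastforce
qed

lemma facet_data_halfspace:
  assumes "facet_data P F n h"
  shows "- n \<noteq> 0" "P \<subseteq> {x. - n \<bullet> x \<le> of_int h}" "F \<subseteq> {x. - n \<bullet> x = of_int h}"
  using assms primitive_vec_nonzero by (auto simp: facet_data_def)

lemma codegree_le:
  assumes "1 \<le> k" "x \<in> lattice_pts" "x \<in> interior (dilate (real k) P)"
  shows "codegree P \<le> k"
  using assms unfolding codegree_def by (auto intro: Least_le)

lemma eventually_forall_pos_affine_sequentially:
  fixes c s :: "'a \<Rightarrow> real"
  assumes "finite I" "\<And>i. i \<in> I \<Longrightarrow> 0 < s i"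
  shows "eventually (\<lambda>N::nat. \<forall>i\<in>I. 0 < c i + real N * s i) sequentially"
proof (rule eventually_ball_finite[OF assms(1)], rule ballI)
  fix i
  assume i: "i \<in> I"
  obtain N0 :: nat where "- c i / s i < real N0"
    using reals_Archimedean2 by blast
  then have "- c i < real N * s i" if "N0 \<le> N" for N
    using assms(2)[OF i] that
    by (smt (verit, best) mult_right_mono of_nat_mono pos_divide_less_eq)
  then show "eventually (\<lambda>N. 0 < c i + real N * s i) sequentially"
    unfolding eventually_sequentially by force
qed

section \<open>Full-dimensional lattice polytopes\<close>

locale full_dim_lattice_polytope =
  fixes P :: "(real^'d) set"
  assumes lattice_polytope: "lattice_polytope P" and full_dim: "full_dim P"
begin

lemma polytope: "polytope P"
  using lattice_polytope by (auto simp: lattice_polytope_def polytope_def)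

lemma polyhedron: "polyhedron P"
  using polytope by (rule polytope_imp_polyhedron)

lemma convex: "convex P"
  using polytope by (rule polytope_imp_convex)

lemma interior_nonempty: "interior P \<noteq> {}"
  using full_dim by (simp add: full_dim_def)

lemma nonempty: "P \<noteq> {}"
  using interior_nonempty interior_subset by blast

lemma aff_dim: "aff_dim P = int CARD('d)"
  using aff_dim_nonempty_interior[OF interior_nonempty] by simp

lemma affine_hull_eq_UNIV: "affine hull P = UNIV"
  using affine_hull_nonempty_interior[OF interior_nonempty] .

lemma facet_aff_dim: "F facet_of P \<Longrightarrow> aff_dim F = int CARD('d) - 1"
  using aff_dim by (simp add: facet_of_def)

lemma facet_lattice_hull:
  assumes "F facet_of P"
  obtains W where "finite W" "W \<noteq> {}" "W \<subseteq> lattice_pts" "F = convex hull W"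
proof -
  obtain V where V: "finite V" "V \<subseteq> lattice_pts" "P = convex hull V"
    using lattice_polytope by (auto simp: lattice_polytope_def)
  moreover have "F face_of convex hull V"
    using assms V(3) by (simp add: facet_of_def)
  ultimately obtain W where W: "W \<subseteq> V" "F = convex hull W"
    using face_of_convex_hull_subset[OF finite_imp_compact[OF V(1)]] by blast
  have "W \<noteq> {}"
    using assms W(2) by (auto simp: facet_of_def)
  moreover have "finite W" "W \<subseteq> lattice_pts"
    using W(1) V(1,2) finite_subset by auto
  ultimately show ?thesis
    using that W(2) by blast
qed

lemma facet_normal_parallel:
  assumes F: "F facet_of P" and a: "a \<noteq> 0" "F \<subseteq> {x. a \<bullet> x = b}" and p0: "p0 \<in> F"
    and w: "\<And>x. x \<in> F \<Longrightarrow> w \<bullet> (x - p0) = 0"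
  obtains c where "w = c *\<^sub>R a"
proof -
  define T where "T = (+) (- p0) ` F"
  define H where "H = {x. a \<bullet> x = 0}"
  have "aff_dim F = int (dim T)"
    unfolding T_def by (rule aff_dim_eq_dim) (simp add: hull_inc p0)
  then have dim_T: "dim T = dim H"
    using facet_aff_dim[OF F] dim_hyperplane[OF a(1)] by (simp add: H_def)
  have "a \<bullet> x = b" if "x \<in> F" for x
    using a(2) that by blast
  then have "T \<subseteq> H"
    using p0 by (auto simp: T_def H_def inner_diff_right)
  then have "span T = H"
    using dim_T by (intro subspace_dim_equal) (auto simp: H_def subspace_hyperplane span_minimal)
  moreover have "span T \<subseteq> {x. w \<bullet> x = 0}"
    using w by (intro span_minimal subspace_hyperplane) (auto simp: T_def)
  ultimately have wH: "a \<bullet> x = 0 \<Longrightarrow> w \<bullet> x = 0" for x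
    by (auto simp: H_def)
  define c where "c = (w \<bullet> a) / (a \<bullet> a)"
  have "a \<bullet> (w - c *\<^sub>R a) = 0"
    using a(1) by (simp add: c_def inner_diff_right inner_commute)
  then have "(w - c *\<^sub>R a) \<bullet> (w - c *\<^sub>R a) = 0"
    using wH by (simp add: inner_diff_left)
  then have "w = c *\<^sub>R a"
    by simp
  then show ?thesis
    by (rule that)
qed

lemma facet_halfspace_unique:
  assumes F: "F facet_of P"
    and a: "a \<noteq> 0" "P \<subseteq> {x. a \<bullet> x \<le> b}" "F \<subseteq> {x. a \<bullet> x = b}"
    and a': "a' \<noteq> 0" "P \<subseteq> {x. a' \<bullet> x \<le> b'}" "F \<subseteq> {x. a' \<bullet> x = b'}"
  obtains c where "c > 0" "a' = c *\<^sub>R a" "b' = c * b"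
proof -
  obtain p0 where p0: "p0 \<in> F"
    using F by (auto simp: facet_of_def)
  obtain c where c: "a' = c *\<^sub>R a"
    using facet_normal_parallel[OF F a(1,3) p0, where w = a'] a'(3) p0
    by (auto simp: inner_diff_right)
  have b': "b' = c * b"
    using p0 a(3) a'(3) c by auto
  obtain q where q: "q \<in> interior P"
    using interior_nonempty by blast
  have "a \<bullet> q < b"
    using interior_mono[OF a(2)] q a(1) by auto
  moreover have "a' \<bullet> q < b'"
    using interior_mono[OF a'(2)] q a'(1) by auto
  then have "c * (a \<bullet> q) < c * b"
    using c b' by simp
  ultimately have "c > 0"
    by (metis mult_less_cancel_left_disj not_less_iff_gr_or_eq)
  then show ?thesis
    using that c b' by blast
qed

lemma facet_data_unique:
  assumes "facet_data P F n h" "facet_data P F n' h'"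
  shows "n' = n" "h' = h"
proof -
  obtain c where c: "c > 0" "- n' = c *\<^sub>R - n" "of_int h' = c * of_int h"
    using facet_halfspace_unique[OF _ facet_data_halfspace[OF assms(1)]
        facet_data_halfspace[OF assms(2)]]
      assms(1) by (auto simp: facet_data_def)
  then have "c = 1"
    using assms by (intro primitive_vec_scaleR_eq[of n n']) (auto simp: facet_data_def)
  with c show "n' = n" "h' = h"
    by simp_all
qed

lemma facet_lattice_orthogonal:
  assumes F: "F facet_of P"
  obtains w p0 where "w \<in> lattice_pts" "w \<noteq> 0" "p0 \<in> F" "p0 \<in> lattice_pts"
    "F \<subseteq> {x. w \<bullet> x = w \<bullet> p0}"
proof -
  obtain W where W: "finite W" "W \<noteq> {}" "W \<subseteq> lattice_pts" "F = convex hull W"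
    using facet_lattice_hull[OF F] .
  then obtain p0 where p0: "p0 \<in> W"
    by blast
  define X where "X = (\<lambda>x. x - p0) ` W"
  have "aff_dim F = int (dim ((+) (- p0) ` W))"
    unfolding W(4) aff_dim_convex_hull by (rule aff_dim_eq_dim) (simp add: hull_inc p0)
  moreover have "(+) (- p0) ` W = X"
    unfolding X_def by (rule image_cong) auto
  ultimately have "dim X < CARD('d)"
    using facet_aff_dim[OF F] by simp
  moreover have "X \<subseteq> lattice_pts"
    using W(3) p0 lattice_pts_diff by (auto simp: X_def)
  ultimately obtain w where w: "w \<in> lattice_pts" "w \<noteq> 0" "\<And>x. x \<in> X \<Longrightarrow> w \<bullet> x = 0"
    using lattice_orthogonal_exists by blast
  have "w \<bullet> (x - p0) = 0" if "x \<in> W" for x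
    using w(3) that by (simp add: X_def)
  then have "W \<subseteq> {x. w \<bullet> x = w \<bullet> p0}"
    by (auto simp: inner_diff_right)
  then have wF: "F \<subseteq> {x. w \<bullet> x = w \<bullet> p0}"
    unfolding W(4) by (intro hull_minimal convex_hyperplane)
  moreover have "p0 \<in> F"
    unfolding W(4) using p0 by (rule hull_inc)
  ultimately show ?thesis
    using that w(1,2) p0 W(3) by blast
qed

lemma facet_lattice_normal:
  assumes F: "F facet_of P"
  obtains w p0 where "w \<in> lattice_pts" "w \<noteq> 0" "p0 \<in> F" "p0 \<in> lattice_pts"
    "P \<subseteq> {x. w \<bullet> p0 \<le> w \<bullet> x}" "F \<subseteq> {x. w \<bullet> x = w \<bullet> p0}"
proof -
  obtain w p0 where w: "w \<in> lattice_pts" "w \<noteq> 0" and p0F: "p0 \<in> F" "p0 \<in> lattice_pts"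
    and wF: "F \<subseteq> {x. w \<bullet> x = w \<bullet> p0}"
    using facet_lattice_orthogonal[OF F] .
  obtain a b where ab: "a \<noteq> 0" "P \<subseteq> {x. a \<bullet> x \<le> b}" "F = P \<inter> {x. a \<bullet> x = b}"
    using facet_of_polyhedron[OF polyhedron F] by blast
  have FH: "F \<subseteq> {x. a \<bullet> x = b}"
    using ab(3) by blast
  have "w \<bullet> (x - p0) = 0" if "x \<in> F" for x
    using wF that by (auto simp: inner_diff_right)
  then obtain c where c: "w = c *\<^sub>R a"
    by (rule facet_normal_parallel[OF F ab(1) FH p0F(1)])
  define w' where "w' = - \<bar>c\<bar> *\<^sub>R a"
  have w': "w' = w \<or> w' = - w"
    by (auto simp: w'_def c abs_if)
  have "w' \<bullet> p0 \<le> w' \<bullet> x" if "x \<in> P" for x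
  proof -
    have "a \<bullet> x \<le> a \<bullet> p0"
      using ab p0F(1) that by auto
    from mult_left_mono[OF this abs_ge_zero[of c]] show ?thesis
      by (simp add: w'_def)
  qed
  moreover have "F \<subseteq> {x. w' \<bullet> x = w' \<bullet> p0}"
    using wF w' by auto
  moreover have "w' \<in> lattice_pts" "w' \<noteq> 0"
    using w w' lattice_pts_uminus by auto
  ultimately show ?thesis
    using that p0F by blast
qed

lemma facet_data_exists:
  assumes F: "F facet_of P"
  obtains n h where "facet_data P F n h"
proof -
  obtain w p0 where w: "w \<in> lattice_pts" "w \<noteq> 0" "p0 \<in> F" "p0 \<in> lattice_pts"
    "P \<subseteq> {x. w \<bullet> p0 \<le> w \<bullet> x}" "F \<subseteq> {x. w \<bullet> x = w \<bullet> p0}"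
    using facet_lattice_normal[OF F] .
  obtain c n where n: "c > 0" "primitive_vec n" "w = c *\<^sub>R n"
    using primitive_part_exists[OF w(1,2)] .
  define h where "h = - \<lfloor>n \<bullet> p0\<rfloor>"
  have "n \<bullet> p0 \<in> \<int>"
    using n(2) w(4) inner_lattice_pts_Ints by (auto simp: primitive_vec_def)
  then have h: "- of_int h = n \<bullet> p0"
    by (simp add: h_def)
  have "P \<subseteq> {y. - of_int h \<le> n \<bullet> y}" "F \<subseteq> {y. n \<bullet> y = - of_int h}"
    using w(5,6) n(1,3) h by auto
  then show ?thesis
    using that F n(2) by (auto simp: facet_data_def)
qed

lemma finite_facet_data: "finite {(n, h). \<exists>F. facet_data P F n h}"
proof -
  have "finite {(n, h). facet_data P F n h}" for F
  proof (cases "\<exists>n h. facet_data P F n h")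
    case True
    then obtain n h where "facet_data P F n h"
      by blast
    then have "{(n', h'). facet_data P F n' h'} \<subseteq> {(n, h)}"
      using facet_data_unique by blast
    then show ?thesis
      by (rule finite_subset) simp
  next
    case False
    then show ?thesis
      by simp
  qed
  moreover have "{(n, h). \<exists>F. facet_data P F n h}
      = (\<Union>F\<in>{F. F facet_of P}. {(n, h). facet_data P F n h})"
    by (auto simp: facet_data_def)
  ultimately show ?thesis
    using finite_polytope_facets[OF polytope] by simp
qed

lemma facet_in_facet_hyperplane_eq:
  assumes G: "facet_data P G n h" and F: "F facet_of P" and FH: "F \<subseteq> {x. n \<bullet> x = - of_int h}"
  shows "F = G"
proof -
  define E where "E = P \<inter> {x. n \<bullet> x = - of_int h}"
  have E: "E face_of P"
    unfolding E_def using G convex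
    by (intro face_of_Int_supporting_hyperplane_ge) (auto simp: facet_data_def)
  obtain q where q: "q \<in> interior P"
    using interior_nonempty by blast
  then have "q \<notin> E"
    using facet_data_interior_dilate_gt[OF G, of q 1] by (auto simp: E_def)
  then have "aff_dim E < aff_dim P"
    using face_of_aff_dim_lt[OF convex E] q interior_subset by blast
  have facet_eq_E: "X = E" if X: "X facet_of P" "X \<subseteq> E" for X
  proof (rule ccontr)
    assume "X \<noteq> E"
    have "X face_of E"
      using X E by (meson face_of_subset facet_of_imp_face_of face_of_imp_subset)
    then have "aff_dim X < aff_dim E"
      using face_of_aff_dim_lt[OF face_of_imp_convex[OF E]] \<open>X \<noteq> E\<close> by blast
    then show False
      using \<open>aff_dim E < aff_dim P\<close> X(1) by (simp add: facet_of_def)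
  qed
  moreover have "F \<subseteq> E" "G \<subseteq> E"
    using F FH G facet_of_imp_subset by (auto simp: E_def facet_data_def)
  ultimately show ?thesis
    using F G unfolding facet_data_def by metis
qed

lemma facet_halfspace_by_facet_data:
  assumes C: "C facet_of P" and a: "a \<noteq> 0" "P \<subseteq> {x. a \<bullet> x \<le> b}" "C \<subseteq> {x. a \<bullet> x = b}"
    and y: "\<forall>F n h. facet_data P F n h \<longrightarrow> - of_int h \<le> n \<bullet> y"
  shows "a \<bullet> y \<le> b"
proof -
  obtain n h where nh: "facet_data P C n h"
    using C by (rule facet_data_exists)
  then obtain c where c: "c > 0" "- n = c *\<^sub>R a" "of_int h = c * b"
    using facet_halfspace_unique[OF C a facet_data_halfspace[OF nh]] by blast
  have "- of_int h \<le> n \<bullet> y"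
    using y nh by blast
  moreover have "n \<bullet> y = - (c * (a \<bullet> y))"
    using arg_cong[OF c(2), of "\<lambda>v. v \<bullet> y"] by simp
  ultimately have "c * (a \<bullet> y) \<le> c * b"
    using c(3) by linarith
  then show ?thesis
    using c(1) by simp
qed

lemma mem_iff_facet_data: "y \<in> P \<longleftrightarrow> (\<forall>F n h. facet_data P F n h \<longrightarrow> - of_int h \<le> n \<bullet> y)"
proof
  assume "y \<in> P"
  then show "\<forall>F n h. facet_data P F n h \<longrightarrow> - of_int h \<le> n \<bullet> y"
    by (auto simp: facet_data_def)
next
  assume y: "\<forall>F n h. facet_data P F n h \<longrightarrow> - of_int h \<le> n \<bullet> y"
  obtain Hs where Hs: "finite Hs" "P = affine hull P \<inter> \<Inter>Hs"
    and "\<And>hs. hs \<in> Hs \<Longrightarrow> \<exists>a b. a \<noteq> 0 \<and> hs = {x. a \<bullet> x \<le> b}"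
    and min: "\<And>Hs'. Hs' \<subset> Hs \<Longrightarrow> P \<subset> affine hull P \<inter> \<Inter>Hs'"
    using polyhedron by (simp add: polyhedron_Int_affine_minimal) meson
  then obtain a b where ab: "\<And>hs. hs \<in> Hs \<Longrightarrow> a hs \<noteq> 0 \<and> hs = {x. a hs \<bullet> x \<le> b hs}"
    by metis
  have "y \<in> hs" if hs: "hs \<in> Hs" for hs
  proof -
    have "P \<inter> {x. a hs \<bullet> x = b hs} facet_of P"
      using facet_of_polyhedron_explicit[OF Hs ab min] hs by auto
    moreover have "P \<subseteq> {x. a hs \<bullet> x \<le> b hs}"
      using Hs(2) hs ab by blast
    ultimately have "a hs \<bullet> y \<le> b hs"
      using ab[OF hs] y by (intro facet_halfspace_by_facet_data) auto
    then show "y \<in> hs"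
      using ab[OF hs] by blast
  qed
  then show "y \<in> P"
    using Hs(2) affine_hull_eq_UNIV by blast
qed

lemma mem_interior_iff_facet_data:
  "y \<in> interior P \<longleftrightarrow> (\<forall>F n h. facet_data P F n h \<longrightarrow> - of_int h < n \<bullet> y)"
proof
  assume "y \<in> interior P"
  then show "\<forall>F n h. facet_data P F n h \<longrightarrow> - of_int h < n \<bullet> y"
    using facet_data_interior_dilate_gt[where t = 1] by fastforce
next
  assume H: "\<forall>F n h. facet_data P F n h \<longrightarrow> - of_int h < n \<bullet> y"
  then have "y \<in> P"
    by (auto simp: mem_iff_facet_data less_imp_le)
  moreover have "y \<notin> F" if F: "F facet_of P" for F
  proof
    assume "y \<in> F"
    obtain n h where "facet_data P F n h"
      using F by (rule facet_data_exists)
    with \<open>y \<in> F\<close> H show False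
      by (force simp: facet_data_def)
  qed
  ultimately have "y \<in> rel_interior P"
    using rel_interior_of_polyhedron[OF polyhedron] by blast
  then show "y \<in> interior P"
    by (simp add: rel_interior_interior affine_hull_eq_UNIV)
qed

lemma mem_interior_dilate_iff_facet_data:
  assumes "t > 0"
  shows "y \<in> interior (dilate t P) \<longleftrightarrow> (\<forall>F n h. facet_data P F n h \<longrightarrow> 0 < n \<bullet> y + t * of_int h)"
proof -
  have "y \<in> interior (dilate t P) \<longleftrightarrow> (1 / t) *\<^sub>R y \<in> interior P"
    using assms by (simp add: interior_dilate mem_dilate_iff)
  also have "\<dots> \<longleftrightarrow> (\<forall>F n h. facet_data P F n h \<longrightarrow> - of_int h < (n \<bullet> y) / t)"
    by (simp add: mem_interior_iff_facet_data)
  also have "\<dots> \<longleftrightarrow> (\<forall>F n h. facet_data P F n h \<longrightarrow> 0 < n \<bullet> y + t * of_int h)"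
  proof -
    have "- of_int h < (n \<bullet> y) / t \<longleftrightarrow> 0 < n \<bullet> y + t * of_int h" for n :: "real^'d" and h
      using assms by (auto simp: pos_less_divide_eq algebra_simps)
    then show ?thesis
      by simp
  qed
  finally show ?thesis .
qed

lemma facet_vertex_sum_pos:
  assumes G: "facet_data P G n h" and F: "F facet_of P" "F \<noteq> G"
    and W: "finite W" "F = convex hull W"
  shows "0 < (\<Sum>v\<in>W. n \<bullet> v + of_int h)"
proof -
  have nonneg: "0 \<le> n \<bullet> v + of_int h" if "v \<in> W" for v
    using G facet_of_imp_subset[OF F(1)] hull_subset[of W convex] that
    by (force simp: facet_data_def W(2))
  have "(\<Sum>v\<in>W. n \<bullet> v + of_int h) \<noteq> 0"
  proof
    assume "(\<Sum>v\<in>W. n \<bullet> v + of_int h) = 0"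
    then have "W \<subseteq> {x. n \<bullet> x = - of_int h}"
      using sum_nonneg_eq_0_iff[OF W(1) nonneg] by (auto simp: algebra_simps)
    then have "F \<subseteq> {x. n \<bullet> x = - of_int h}"
      unfolding W(2) by (intro hull_minimal convex_hyperplane)
    then show False
      using facet_in_facet_hyperplane_eq[OF G F(1)] F(2) by blast
  qed
  moreover have "0 \<le> (\<Sum>v\<in>W. n \<bullet> v + of_int h)"
    using nonneg by (rule sum_nonneg)
  ultimately show ?thesis
    by linarith
qed

lemma facet_vertex_sum_dominates:
  assumes F: "facet_data P F n h" and W: "finite W" "F = convex hull W"
  obtains N :: nat where "N \<ge> 1"
    "\<And>G n' h'. facet_data P G n' h' \<Longrightarrow> (n', h') \<noteq> (n, h) \<Longrightarrow>
      0 < n' \<bullet> z + real N * (\<Sum>v\<in>W. n' \<bullet> v + of_int h')"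
proof -
  define s where "s i = (\<Sum>v\<in>W. fst i \<bullet> v + of_int (snd i))" for i :: "(real^'d) \<times> int"
  define D where "D = {(n', h'). \<exists>G. facet_data P G n' h'} - {(n, h)}"
  have "0 < s i" if D: "i \<in> D" for i
  proof -
    have "\<exists>G. facet_data P G (fst i) (snd i)" "i \<noteq> (n, h)"
      using D unfolding D_def by (simp_all add: case_prod_beta)
    then obtain G where G: "facet_data P G (fst i) (snd i)" "i \<noteq> (n, h)"
      by blast
    then have "F \<noteq> G"
      using F facet_data_unique by (metis prod.collapse)
    then show ?thesis
      using facet_vertex_sum_pos[OF G(1) _ _ W] F by (simp add: s_def facet_data_def)
  qed
  moreover have "finite D"
    using finite_facet_data by (simp add: D_def)
  ultimately have "eventually (\<lambda>N::nat. \<forall>i\<in>D. 0 < fst i \<bullet> z + real N * s i) sequentially"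
    by (intro eventually_forall_pos_affine_sequentially)
  then obtain N0 where N0: "\<And>N. N0 \<le> N \<Longrightarrow> \<forall>i\<in>D. 0 < fst i \<bullet> z + real N * s i"
    unfolding eventually_sequentially by blast
  have "Suc N0 \<ge> N0"
    by simp
  then have "\<forall>i\<in>D. 0 < fst i \<bullet> z + real (Suc N0) * s i"
    by (rule N0)
  then show ?thesis
    using that[of "Suc N0"] by (force simp: D_def s_def)
qed

text \<open>Take \<open>u = z + N \<Sum>W\<close> with \<open>n z = 1\<close>, where \<open>W\<close> are the vertices of the facet:
  they contribute nothing to the inequality of the facet itself and a positive amount to
  every other facet inequality, which dominates for large \<open>N\<close>.\<close>
lemma facet_level_one_interior_point:
  assumes F: "facet_data P F n h"
  obtains u j where "u \<in> lattice_pts" "j \<ge> 1" "u \<in> interior (dilate (real j) P)"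
    "n \<bullet> u + real j * of_int h = 1"
proof -
  obtain W where W: "finite W" "W \<noteq> {}" "W \<subseteq> lattice_pts" "F = convex hull W"
    using F facet_lattice_hull by (auto simp: facet_data_def)
  obtain z where z: "z \<in> lattice_pts" "n \<bullet> z = 1"
    using F primitive_vec_bezout by (auto simp: facet_data_def)
  obtain N where N: "N \<ge> 1"
    "\<And>G n' h'. facet_data P G n' h' \<Longrightarrow> (n', h') \<noteq> (n, h) \<Longrightarrow>
      0 < n' \<bullet> z + real N * (\<Sum>v\<in>W. n' \<bullet> v + of_int h')"
    using facet_vertex_sum_dominates[OF F W(1,4), where z = z] by blast
  define u where "u = z + real N *\<^sub>R (\<Sum>v\<in>W. v)"
  define j where "j = N * card W"
  have level: "n' \<bullet> u + real j * of_int h' = n' \<bullet> z + real N * (\<Sum>v\<in>W. n' \<bullet> v + of_int h')"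
    for n' h'
    by (simp add: u_def j_def inner_add_right inner_sum_right sum.distrib algebra_simps)
  have "(\<Sum>v\<in>W. n \<bullet> v + of_int h) = 0"
    using F W(4) hull_subset[of W convex] by (force simp: facet_data_def intro: sum.neutral)
  then have level_one: "n \<bullet> u + real j * of_int h = 1"
    using level[of n h] z(2) by simp
  have "j \<ge> 1"
    using N(1) W(1,2) by (simp add: j_def Suc_le_eq card_gt_0_iff)
  moreover have "0 < n' \<bullet> u + real j * of_int h'" if "facet_data P G n' h'" for G n' h'
    using level_one level N(2)[OF that] by (cases "(n', h') = (n, h)") auto
  then have "u \<in> interior (dilate (real j) P)"
    using \<open>j \<ge> 1\<close> by (subst mem_interior_dilate_iff_facet_data) auto
  moreover have "u \<in> lattice_pts"
    unfolding u_def using z(1) W(3)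
    by (intro lattice_pts_add lattice_pts_scaleR lattice_pts_sum) auto
  ultimately show ?thesis
    using that level_one by blast
qed

lemma codegree_spec:
  shows "1 \<le> codegree P" "interior (dilate (real (codegree P)) P) \<inter> lattice_pts \<noteq> {}"
proof -
  obtain F where "F facet_of P"
    using polytope_facet_exists[OF polytope] aff_dim by auto
  then obtain n h where "facet_data P F n h"
    by (rule facet_data_exists)
  then obtain u j where "u \<in> lattice_pts" "j \<ge> 1" "u \<in> interior (dilate (real j) P)"
    by (rule facet_level_one_interior_point)
  then have "\<exists>k. 1 \<le> k \<and> interior (dilate (real k) P) \<inter> lattice_pts \<noteq> {}"
    by blast
  then have "1 \<le> codegree P \<and> interior (dilate (real (codegree P)) P) \<inter> lattice_pts \<noteq> {}"
    unfolding codegree_def by (rule LeastI_ex)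
  then show "1 \<le> codegree P" "interior (dilate (real (codegree P)) P) \<inter> lattice_pts \<noteq> {}"
    by simp_all
qed

end

section \<open>Monomials of the Ehrhart ring\<close>

text \<open>\<open>ehr_monomial (x, k) c\<close> is \<open>c t\<^sup>x s\<^sup>k\<close>, \<open>ehr_interior_exps P\<close> are the exponents of
  the monomials spanning the canonical module, and \<open>ehr_dvd P x k y l\<close> says that
  \<open>t\<^sup>x s\<^sup>k\<close> divides \<open>t\<^sup>y s\<^sup>l\<close> in the Ehrhart ring.\<close>

definition ehr_monomial :: "(real^'d) \<times> nat \<Rightarrow> 'k::field \<Rightarrow> ((real^'d) \<times> nat \<Rightarrow> 'k)" where
  "ehr_monomial u c = (\<lambda>m. if m = u then c else 0)"

definition ehr_interior_exps :: "(real^'d) set \<Rightarrow> ((real^'d) \<times> nat) set" where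
  "ehr_interior_exps P = {(x,k). k \<ge> 1 \<and> x \<in> lattice_pts \<and> x \<in> interior (dilate (real k) P)}"

definition ehr_dvd :: "(real^'d) set \<Rightarrow> real^'d \<Rightarrow> nat \<Rightarrow> real^'d \<Rightarrow> nat \<Rightarrow> bool" where
  "ehr_dvd P x k y l \<longleftrightarrow> (\<exists>s t. (s, t) \<in> ehr_exps P \<and> y = x + s \<and> l = k + t)"

lemma supp_ehr_monomial: "c \<noteq> 0 \<Longrightarrow> supp (ehr_monomial u c) = {u}"
  by (auto simp: supp_def ehr_monomial_def)

lemma ehr_monomial_in_canonical:
  assumes "u \<in> ehr_interior_exps P"
  shows "ehr_monomial u c \<in> ehr_canonical P"
  using assms interior_subset
  by (auto simp: ehr_canonical_def ehr_ring_def ehr_exps_def ehr_interior_exps_def supp_def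
      ehr_monomial_def)

lemma ehr_canonical_subset_ring: "ehr_canonical P \<subseteq> ehr_ring P"
  by (simp add: ehr_canonical_def)

lemma emult_commute: "emult f g = emult g f"
proof (rule ext, clarify)
  fix z n
  define A where
    "A = {p \<in> supp f \<times> supp g. fst (fst p) + fst (snd p) = z \<and> snd (fst p) + snd (snd p) = n}"
  have "{p \<in> supp g \<times> supp f. fst (fst p) + fst (snd p) = z \<and> snd (fst p) + snd (snd p) = n}
      = prod.swap ` A"
    by (auto simp: image_iff add.commute A_def)
  then show "emult f g (z, n) = emult g f (z, n)"
    by (simp add: emult_def sum.reindex mult.commute flip: A_def)
qed

lemma emult_monomial_shift:
  fixes g :: "(real^'d) \<times> nat \<Rightarrow> 'k::field"
  shows "emult (ehr_monomial (x, k) 1) g (z + x, n + k) = g (z, n)"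
proof -
  have "{p \<in> supp (ehr_monomial (x, k) (1::'k)) \<times> supp g.
      fst (fst p) + fst (snd p) = z + x \<and> snd (fst p) + snd (snd p) = n + k}
    = (if g (z, n) = 0 then {} else {((x, k), (z, n))})"
    by (auto simp: supp_def ehr_monomial_def add.commute)
  then show ?thesis
    unfolding emult_def by (auto simp: ehr_monomial_def)
qed

lemma emult_nonzero_imp_sum:
  assumes "emult f g (z, n) \<noteq> 0"
  obtains p q where "p \<in> supp f" "q \<in> supp g" "fst p + fst q = z" "snd p + snd q = n"
proof -
  have "{p \<in> supp f \<times> supp g. fst (fst p) + fst (snd p) = z \<and> snd (fst p) + snd (snd p) = n} \<noteq> {}"
    using assms unfolding emult_def by (metis (no_types, lifting) case_prod_conv sum.empty)
  then show ?thesis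
    using that by auto
qed

lemma ehr_trace_nonzero_imp_hom:
  fixes t :: "(real^'d) \<times> nat \<Rightarrow> 'k::field"
  assumes "t \<in> ehr_trace P" "t m \<noteq> 0"
  shows "\<exists>\<phi> (w :: (real^'d) \<times> nat \<Rightarrow> 'k). ehr_hom_canonical P \<phi> \<and> w \<in> ehr_canonical P \<and> \<phi> w m \<noteq> 0"
  using assms
proof (induction rule: ehr_trace.induct)
  case zero
  then show ?case by (simp add: ezero_def)
next
  case (step \<phi> w t)
  show ?case
  proof (cases "\<phi> w m = 0")
    case True
    then show ?thesis
      using step by (simp add: eadd_def)
  next
    case False
    then show ?thesis
      using step by blast
  qed
qed

lemma ehr_hom_canonical_ezero:
  fixes \<phi> :: "((real^'d) \<times> nat \<Rightarrow> 'k::field) \<Rightarrow> ((real^'d) \<times> nat \<Rightarrow> 'k)"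
  assumes "ehr_hom_canonical P \<phi>"
  shows "\<phi> ezero = ezero"
proof -
  have "ezero \<in> ehr_canonical P"
    by (simp add: ehr_canonical_def ehr_ring_def supp_def ezero_def)
  moreover have "eadd ezero ezero = ezero"
    by (simp add: eadd_def ezero_def)
  ultimately have "\<phi> ezero = eadd (\<phi> ezero) (\<phi> ezero)"
    using assms unfolding ehr_hom_canonical_def by metis
  then have "\<phi> ezero m = 0" for m
    by (metis eadd_def add_cancel_right_right)
  then show ?thesis
    by (simp add: fun_eq_iff ezero_def)
qed

lemma ehr_monomial_zero: "ehr_monomial u 0 = ezero"
  by (simp add: ehr_monomial_def ezero_def fun_eq_iff)

lemma ehr_canonical_split_monomial:
  assumes "w \<in> ehr_canonical P"
  shows "w = eadd (w(u := 0)) (ehr_monomial u (w u))"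
    and "w(u := 0) \<in> ehr_canonical P" "ehr_monomial u (w u) \<in> ehr_canonical P"
proof -
  show "w = eadd (w(u := 0)) (ehr_monomial u (w u))"
    by (auto simp: eadd_def ehr_monomial_def)
  have "supp (w(u := 0)) \<subseteq> supp w" "supp (ehr_monomial u (w u)) \<subseteq> supp w"
    by (auto simp: supp_def ehr_monomial_def)
  then show "w(u := 0) \<in> ehr_canonical P" "ehr_monomial u (w u) \<in> ehr_canonical P"
    using assms by (auto simp: ehr_canonical_def ehr_ring_def intro: finite_subset)
qed

lemma ehr_hom_canonical_nonzero_on_monomial:
  fixes \<phi> :: "((real^'d) \<times> nat \<Rightarrow> 'k::field) \<Rightarrow> ((real^'d) \<times> nat \<Rightarrow> 'k)"
  assumes hom: "ehr_hom_canonical P \<phi>" and w: "w \<in> ehr_canonical P" and nz: "\<phi> w m \<noteq> 0"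
  obtains u where "u \<in> supp w" "\<phi> (ehr_monomial u (w u)) m \<noteq> 0"
proof -
  have "\<exists>u\<in>supp w. \<phi> (ehr_monomial u (w u)) m \<noteq> 0"
    if "finite S" "w \<in> ehr_canonical P" "supp w \<subseteq> S" "\<phi> w m \<noteq> 0" for S w
    using that
  proof (induction S arbitrary: w rule: finite_induct)
    case empty
    then have "w = ezero"
      by (auto simp: supp_def ezero_def)
    with empty.prems(3) show ?case
      using ehr_hom_canonical_ezero[OF hom] by (simp add: ezero_def)
  next
    case (insert u S)
    note split = ehr_canonical_split_monomial[OF insert.prems(1), of u]
    have "\<phi> w = eadd (\<phi> (w(u := 0))) (\<phi> (ehr_monomial u (w u)))"
      using hom split unfolding ehr_hom_canonical_def by metis
    then consider "\<phi> (w(u := 0)) m \<noteq> 0" | "\<phi> (ehr_monomial u (w u)) m \<noteq> 0"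
      using insert.prems(3) by (force simp: eadd_def)
    then show ?case
    proof cases
      case 1
      moreover have "supp (w(u := 0)) \<subseteq> S"
        using insert.prems(2) by (auto simp: supp_def)
      ultimately obtain u' where u': "u' \<in> supp (w(u := 0))"
        "\<phi> (ehr_monomial u' ((w(u := 0)) u')) m \<noteq> 0"
        using insert.IH split(2) by blast
      then have "u' \<noteq> u" "u' \<in> supp w"
        by (auto simp: supp_def split: if_splits)
      with u'(2) show ?thesis
        by (intro bexI[of _ u']) simp_all
    next
      case 2
      then have "w u \<noteq> 0"
        using ehr_hom_canonical_ezero[OF hom] by (metis ehr_monomial_zero ezero_def)
      with 2 show ?thesis
        unfolding supp_def by blast
    qed
  qed
  moreover have "finite (supp w)"
    using w by (simp add: ehr_canonical_def ehr_ring_def)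
  ultimately show ?thesis
    using w nz that by blast
qed

lemma ehr_hom_canonical_swap:
  fixes \<phi> :: "((real^'d) \<times> nat \<Rightarrow> 'k::field) \<Rightarrow> ((real^'d) \<times> nat \<Rightarrow> 'k)"
  assumes "ehr_hom_canonical P \<phi>" "w1 \<in> ehr_canonical P" "w2 \<in> ehr_canonical P"
  shows "emult w1 (\<phi> w2) = emult w2 (\<phi> w1)"
proof -
  have "emult w1 (\<phi> w2) = \<phi> (emult w1 w2)"
    using assms ehr_canonical_subset_ring unfolding ehr_hom_canonical_def by (metis subsetD)
  also have "\<dots> = \<phi> (emult w2 w1)"
    by (simp add: emult_commute)
  also have "\<dots> = emult w2 (\<phi> w1)"
    using assms ehr_canonical_subset_ring unfolding ehr_hom_canonical_def by (metis subsetD)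
  finally show ?thesis .
qed

text \<open>For \<open>m = t\<^sup>x s\<^sup>k\<close> and \<open>m' = t\<^sup>x\<^sup>' s\<^sup>k\<^sup>'\<close>, compare the coefficients at
  \<open>(y + x', l + k')\<close> on both sides of \<open>m' \<phi>(c m) = c m \<phi>(m')\<close>.\<close>
lemma ehr_hom_canonical_monomial_dvd:
  fixes \<phi> :: "((real^'d) \<times> nat \<Rightarrow> 'k::field) \<Rightarrow> ((real^'d) \<times> nat \<Rightarrow> 'k)"
  assumes hom: "ehr_hom_canonical P \<phi>" and xk: "(x, k) \<in> ehr_interior_exps P" "c \<noteq> 0"
    and nz: "\<phi> (ehr_monomial (x, k) c) (y, l) \<noteq> 0"
    and x'k': "(x', k') \<in> ehr_interior_exps P"
  shows "ehr_dvd P x k (y + x') (l + k')"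
proof -
  define w where "w = ehr_monomial (x, k) c"
  define e where "e = ehr_monomial (x', k') (1 :: 'k)"
  have w: "w \<in> ehr_canonical P" "supp w = {(x, k)}"
    using xk by (simp_all add: w_def ehr_monomial_in_canonical supp_ehr_monomial)
  have e: "e \<in> ehr_canonical P"
    using x'k' by (simp add: e_def ehr_monomial_in_canonical)
  have "emult e (\<phi> w) (y + x', l + k') = \<phi> w (y, l)"
    unfolding e_def by (rule emult_monomial_shift)
  then have "emult w (\<phi> e) (y + x', l + k') \<noteq> 0"
    using ehr_hom_canonical_swap[OF hom e w(1)] nz by (simp add: w_def)
  then obtain p q where "p \<in> supp w" "q \<in> supp (\<phi> e)" "fst p + fst q = y + x'"
    "snd p + snd q = l + k'"
    by (rule emult_nonzero_imp_sum)
  moreover have "supp (\<phi> e) \<subseteq> ehr_exps P"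
    using hom e by (simp add: ehr_hom_canonical_def ehr_ring_def)
  ultimately show ?thesis
    using w(2) unfolding ehr_dvd_def by (metis prod.collapse fst_conv snd_conv singletonD subsetD)
qed

lemma nearly_gorenstein_trace_monomial:
  fixes P :: "(real^'d) set"
  assumes ng: "nearly_gorenstein TYPE('k::field) P" and v: "v \<in> lattice_pts" "v \<in> P"
  obtains \<phi> :: "((real^'d) \<times> nat \<Rightarrow> 'k::field) \<Rightarrow> ((real^'d) \<times> nat \<Rightarrow> 'k)" and u c
  where "ehr_hom_canonical P \<phi>" "u \<in> ehr_interior_exps P" "c \<noteq> 0"
    "\<phi> (ehr_monomial u c) (v, 1) \<noteq> 0"
proof -
  define e :: "(real^'d) \<times> nat \<Rightarrow> 'k" where "e = ehr_monomial (v, 1) 1"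
  have "supp e = {(v, 1)}"
    by (simp add: e_def supp_ehr_monomial)
  with v have "e \<in> ehr_ring P"
    by (simp add: ehr_ring_def ehr_exps_def dilate_def)
  then have "e \<in> ehr_max_ideal P"
    by (simp add: ehr_max_ideal_def e_def ehr_monomial_def)
  with ng have "e \<in> ehr_trace P"
    by (auto simp: nearly_gorenstein_def)
  moreover have "e (v, 1) \<noteq> 0"
    by (simp add: e_def ehr_monomial_def)
  ultimately obtain \<phi> and w :: "(real^'d) \<times> nat \<Rightarrow> 'k"
    where hom: "ehr_hom_canonical P \<phi>" and w: "w \<in> ehr_canonical P" and "\<phi> w (v, 1) \<noteq> 0"
    using ehr_trace_nonzero_imp_hom by blast
  then obtain u where u: "u \<in> supp w" "\<phi> (ehr_monomial u (w u)) (v, 1) \<noteq> 0"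
    by (rule ehr_hom_canonical_nonzero_on_monomial)
  moreover have "u \<in> ehr_interior_exps P"
    using w u by (auto simp: ehr_canonical_def ehr_ring_def ehr_exps_def ehr_interior_exps_def)
  moreover have "w u \<noteq> 0"
    using u by (simp add: supp_def)
  ultimately show ?thesis
    using that hom by blast
qed

lemma nearly_gorenstein_interior_monomial_dvd:
  fixes P :: "(real^'d) set"
  assumes ng: "nearly_gorenstein TYPE('k::field) P" and v: "v \<in> lattice_pts" "v \<in> P"
  obtains x k where "(x, k) \<in> ehr_interior_exps P"
    and "\<And>x' k'. (x', k') \<in> ehr_interior_exps P \<Longrightarrow> ehr_dvd P x k (v + x') (1 + k')"
proof -
  obtain \<phi> :: "((real^'d) \<times> nat \<Rightarrow> 'k) \<Rightarrow> ((real^'d) \<times> nat \<Rightarrow> 'k)" and x k c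
    where "ehr_hom_canonical P \<phi>" "(x, k) \<in> ehr_interior_exps P" "c \<noteq> 0"
      "\<phi> (ehr_monomial (x, k) c) (v, 1) \<noteq> 0"
    using nearly_gorenstein_trace_monomial[OF ng v] by (metis prod.collapse)
  then show ?thesis
    using that ehr_hom_canonical_monomial_dvd by metis
qed

section \<open>Nearly Gorenstein polytopes\<close>

definition remainder_lattice_pts :: "(real^'d) set \<Rightarrow> (real^'d) set" where
  "remainder_lattice_pts P = {x \<in> lattice_pts. \<forall>F n h. facet_data P F n h \<longrightarrow>
     (real (codegree P) - 1) * of_int h - 1 \<le> n \<bullet> x}"

lemma remainder_polytope_eq: "remainder_polytope P = convex hull (remainder_lattice_pts P)"
  by (simp add: remainder_polytope_def remainder_lattice_pts_def)

lemma minkowski_sum_eq_set_plus: "minkowski_sum A B = A + B"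
  by (auto simp: minkowski_sum_def set_plus_def)

context full_dim_lattice_polytope
begin

lemma floor_plus_remainder_subset:
  "(interior (dilate (real (codegree P)) P) \<inter> lattice_pts) + remainder_lattice_pts P \<subseteq> P"
proof
  fix z
  assume "z \<in> (interior (dilate (real (codegree P)) P) \<inter> lattice_pts) + remainder_lattice_pts P"
  then obtain x y where x: "x \<in> interior (dilate (real (codegree P)) P)" "x \<in> lattice_pts"
    and y: "y \<in> remainder_lattice_pts P" and z: "z = x + y"
    by (auto simp: set_plus_def)
  have "- of_int h \<le> n \<bullet> z" if nh: "facet_data P F n h" for F n h
  proof -
    have "1 \<le> n \<bullet> x + real (codegree P) * of_int h"
      using facet_data_interior_lattice_ge_1[OF nh x(1) codegree_spec(1) x(2)] .
    moreover have "(real (codegree P) - 1) * of_int h - 1 \<le> n \<bullet> y"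
      using y nh by (auto simp: remainder_lattice_pts_def)
    ultimately show ?thesis
      using z by (simp add: inner_add_right algebra_simps)
  qed
  then show "z \<in> P"
    by (simp add: mem_iff_facet_data)
qed

lemma interior_dvd_remainder_bound:
  assumes dvd: "\<And>x' k'. (x', k') \<in> ehr_interior_exps P \<Longrightarrow> ehr_dvd P x k (v + x') (1 + k')"
    and nh: "facet_data P F n h"
  shows "-1 \<le> n \<bullet> (v - x) + (1 - real k) * of_int h"
proof -
  obtain u j where u: "u \<in> lattice_pts" "j \<ge> 1" "u \<in> interior (dilate (real j) P)"
    and level_one: "n \<bullet> u + real j * of_int h = 1"
    using facet_level_one_interior_point[OF nh] .
  then obtain s t where st: "(s, t) \<in> ehr_exps P" "v + u = x + s" "1 + j = k + t"
    using dvd[of u j] by (auto simp: ehr_interior_exps_def ehr_dvd_def)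
  have "0 \<le> n \<bullet> s + real t * of_int h"
    using facet_data_dilate_ge[OF nh] st(1) by (auto simp: ehr_exps_def)
  moreover have "s = v + u - x" "real t = 1 + real j - real k"
    using st(2,3) by (simp_all add: algebra_simps)
  ultimately show ?thesis
    using level_one by (simp add: inner_diff_right inner_add_right algebra_simps)
qed

lemma interior_dvd_codegree_cases:
  assumes xk: "(x, k) \<in> ehr_interior_exps P"
    and dvd: "\<And>x' k'. (x', k') \<in> ehr_interior_exps P \<Longrightarrow> ehr_dvd P x k (v + x') (1 + k')"
  obtains "k = codegree P"
  | x0 where "x0 \<in> interior (dilate (real (codegree P)) P)" "x0 \<in> lattice_pts"
    "k = codegree P + 1" "x = v + x0"
proof -
  let ?a = "codegree P"
  obtain x0 where x0: "x0 \<in> interior (dilate (real ?a) P)" "x0 \<in> lattice_pts"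
    using codegree_spec(2) by blast
  then have "(x0, ?a) \<in> ehr_interior_exps P"
    using codegree_spec(1) by (simp add: ehr_interior_exps_def)
  then have "ehr_dvd P x k (v + x0) (1 + ?a)"
    by (rule dvd)
  then obtain s t where st: "(s, t) \<in> ehr_exps P" "v + x0 = x + s" "1 + ?a = k + t"
    unfolding ehr_dvd_def by blast
  have "?a \<le> k"
    using xk by (intro codegree_le) (auto simp: ehr_interior_exps_def)
  with st(3) consider "k = ?a" | "k = ?a + 1" "t = 0"
    by linarith
  then show ?thesis
  proof cases
    case 2
    then have "s = 0"
      using st(1) dilate_zero[OF nonempty] by (simp add: ehr_exps_def)
    with st(2) have "x = v + x0"
      by simp
    with 2 x0 that(2) show ?thesis
      by blast
  qed (rule that(1))
qed

lemma lattice_pt_mem_floor_plus_remainder: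
  assumes ng: "nearly_gorenstein TYPE('k::field) P" and v: "v \<in> lattice_pts" "v \<in> P"
  shows "v \<in> (interior (dilate (real (codegree P)) P) \<inter> lattice_pts) + remainder_lattice_pts P"
proof -
  let ?a = "codegree P"
  obtain x k where xk: "(x, k) \<in> ehr_interior_exps P"
    and dvd: "\<And>x' k'. (x', k') \<in> ehr_interior_exps P \<Longrightarrow> ehr_dvd P x k (v + x') (1 + k')"
    using nearly_gorenstein_interior_monomial_dvd[OF ng v] by blast
  have bound: "-1 \<le> n \<bullet> (v - x) + (1 - real k) * of_int h" if "facet_data P F n h" for F n h
    using interior_dvd_remainder_bound[OF dvd that] .
  consider "k = ?a"
    | x0 where "x0 \<in> interior (dilate (real ?a) P)" "x0 \<in> lattice_pts" "k = ?a + 1" "x = v + x0"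
    using interior_dvd_codegree_cases[OF xk dvd] by blast
  then show ?thesis
  proof cases
    case 1
    have x: "x \<in> interior (dilate (real ?a) P) \<inter> lattice_pts"
      using xk 1 by (simp add: ehr_interior_exps_def)
    have "(real ?a - 1) * of_int h - 1 \<le> n \<bullet> (v - x)" if nh: "facet_data P F n h" for F n h
      using bound[OF nh] 1 by (simp add: algebra_simps)
    then have "v - x \<in> remainder_lattice_pts P"
      using lattice_pts_diff[OF v(1)] x by (simp add: remainder_lattice_pts_def)
    from set_plus_intro[OF x this] show ?thesis
      by simp
  next
    case (2 x0)
    have "(real ?a - 1) * of_int h - 1 \<le> n \<bullet> (v - x0)" if nh: "facet_data P F n h" for F n h
    proof -
      have "- of_int h \<le> n \<bullet> v"
        using nh v(2) by (auto simp: facet_data_def)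
      then show ?thesis
        using bound[OF nh] 2 by (simp add: inner_diff_right inner_add_right algebra_simps)
    qed
    then have "v - x0 \<in> remainder_lattice_pts P"
      using v(1) 2 by (simp add: remainder_lattice_pts_def lattice_pts_diff)
    from set_plus_intro[OF IntI[OF 2(1,2)] this] show ?thesis
      by simp
  qed
qed

end

theorem proposition3p5:
  fixes P :: "(real^'d) set"
  assumes "infinite (UNIV :: 'k::field set)"
    and "lattice_polytope P"
    and "full_dim P"
    and "nearly_gorenstein TYPE('k) P"
  shows "P = minkowski_sum (floor_polytope (dilate (real (codegree P)) P)) (remainder_polytope P)"
proof -
  interpret full_dim_lattice_polytope P
    using assms(2,3) by unfold_locales
  define A where "A = interior (dilate (real (codegree P)) P) \<inter> lattice_pts"
  define B where "B = remainder_lattice_pts P"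
  obtain V where V: "finite V" "V \<subseteq> lattice_pts" "P = convex hull V"
    using assms(2) by (auto simp: lattice_polytope_def)
  have "V \<subseteq> A + B"
    using lattice_pt_mem_floor_plus_remainder[OF assms(4)] V(2,3) hull_inc
    by (fastforce simp: A_def B_def)
  then have "P \<subseteq> convex hull (A + B)"
    unfolding V(3) by (rule hull_mono)
  moreover have "convex hull (A + B) \<subseteq> P"
    using floor_plus_remainder_subset convex unfolding A_def B_def by (rule hull_minimal)
  ultimately have "P = convex hull (A + B)"
    by blast
  then show ?thesis
    by (simp add: A_def B_def floor_polytope_def remainder_polytope_eq minkowski_sum_eq_set_plus
        convex_hull_set_plus)
qed

end
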